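(* Let $m,n\in\mathbb{N}$. For $1\le\ell\le m$ let $0<q_{\ell}<1$ and $K_{\ell}=\frac{\pi}{2}\left(\sum_{r\in\mathbb{Z}}q_{\ell}^{r^{2}}\right)^{2}$, and let $v_{j,\ell}\in\mathbb{C}$ ($1\le j\le n$) satisfy $q_{\ell}e^{4\pi|\Im(v_{j,\ell})|}<1$ for all $1\le j\le n$, $1\le \ell\le m$. Then the $n\times n$ matrix \[ \left(\prod_{\ell=1}^{m}\mathrm{dn}\left(2K_{\ell}\left(v_{j,\ell}-\overline{v_{k,\ell}}\right)\right)\right)_{j,k=1}^{n} \] is positive semidefinite, where $\mathrm{dn}$ is computed with nome $q_\ell$ in the $\ell$-th factor.
   Context: For $0<q<1$ and $K=\frac{\pi}{2}\theta_3^2$ with $\theta_3=\sum_{r\in\mathbb{Z}}q^{r^2}$, the Jacobi elliptic function is given by $\mathrm{dn}(2Kv)=\frac{\pi}{K}\sum_{n\in\mathbb{Z}}\frac{q^{n}}{1+q^{2n}}e^{2n\pi vi}$ for $v\in\mathbb{C}$ with $qe^{2\pi|\Im(v)|}<1$. A complex matrix $A=(a_{j,k})$ is positive semidefinite if $\sum_{j,k}a_{j,k}z_j\overline{z_k}\ge0$ for all complex $z_j$. *)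

theory Defs
  imports "HOL-Analysis.Analysis" "HOL-Library.Complex_Order"
begin

definition theta3 :: "real \<Rightarrow> real" where
  "theta3 q = (\<Sum>\<^sub>\<infinity>r::int. q ^ nat (r^2))"

definition jacobiK :: "real \<Rightarrow> real" where
  "jacobiK q = pi / 2 * (theta3 q)^2"

text \<open>Jacobi dn with nome q, via the Fourier series in the paper:
  dn(2Kv) = (pi/K) * sum_{n in Z} q^n/(1+q^(2n)) e^(2 n pi v i), i.e. with v = u/(2K).\<close>
definition dn :: "real \<Rightarrow> complex \<Rightarrow> complex" where
  "dn q u = complex_of_real (pi / jacobiK q) *
     (\<Sum>\<^sub>\<infinity>n::int. complex_of_real (q powi n / (1 + q powi (2*n))) *
        exp (2 * of_int n * complex_of_real pi * (u / complex_of_real (2 * jacobiK q)) * \<i>))"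

definition psd_matrix :: "nat \<Rightarrow> (nat \<Rightarrow> nat \<Rightarrow> complex) \<Rightarrow> bool" where
  "psd_matrix n A \<longleftrightarrow>
     (\<forall>z::nat \<Rightarrow> complex. 0 \<le> (\<Sum>j\<in>{1..n}. \<Sum>k\<in>{1..n}. A j k * z j * cnj (z k)))"

end

theory Submission
  imports Defs
begin

text \<open>Expanding dn in its Fourier series, every factor is
  dn(2K(a - cnj b)) = (pi/K) sum_n c_n e_n(a) cnj(e_n(b)) with nonnegative coefficients
  c_n = q^n / (1 + q^(2n)) and e_n(v) = exp(2 pi i n v), so each factor matrix is an
  entrywise limit of Gram matrices of finitely many vectors. Gram matrices are positive
  semidefinite and closed under Hadamard products (Schur product theorem), and positive
  semidefiniteness survives entrywise limits. The hypothesis q exp(4 pi |Im v|) < 1 gives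
  absolute convergence: the n-th term is bounded by (q exp(2 pi |Im(a - cnj b)|))^|n|.\<close>

text \<open>The vectors are indexed by a finite set of naturals so that the existential stays
  within one type; \<open>gram_representableI\<close> admits any countable index type.\<close>
definition gram_representable :: "nat \<Rightarrow> (nat \<Rightarrow> nat \<Rightarrow> complex) \<Rightarrow> bool" where
  "gram_representable n A \<longleftrightarrow> (\<exists>I::nat set. \<exists>g. finite I \<and>
      (\<forall>j\<in>{1..n}. \<forall>k\<in>{1..n}. A j k = (\<Sum>i\<in>I. g i j * cnj (g i k))))"

lemma gram_representableI:
  fixes S :: "'a::countable set" and g :: "'a \<Rightarrow> nat \<Rightarrow> complex"
  assumes "finite S"
    and "\<And>j k. j \<in> {1..n} \<Longrightarrow> k \<in> {1..n} \<Longrightarrow> A j k = (\<Sum>s\<in>S. g s j * cnj (g s k))"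
  shows "gram_representable n A"
  unfolding gram_representable_def
proof (intro exI conjI ballI)
  show "finite (to_nat ` S)" using assms(1) by simp
  fix j k assume "j \<in> {1..n}" "k \<in> {1..n}"
  then show "A j k = (\<Sum>i\<in>to_nat ` S. g (from_nat i) j * cnj (g (from_nat i) k))"
    using assms(2) by (subst sum.reindex) (auto simp: inj_on_def)
qed

lemma gram_representable_weighted_sum:
  fixes S :: "'a::countable set" and c :: "'a \<Rightarrow> real" and f :: "'a \<Rightarrow> nat \<Rightarrow> complex"
  assumes "finite S" and "\<And>s. s \<in> S \<Longrightarrow> 0 \<le> c s"
  shows "gram_representable n (\<lambda>j k. \<Sum>s\<in>S. of_real (c s) * (f s j * cnj (f s k)))"
proof (rule gram_representableI[where g = "\<lambda>s j. of_real (sqrt (c s)) * f s j"])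
  fix j k
  have sq: "of_real (sqrt (c s)) * of_real (sqrt (c s)) = (of_real (c s) :: complex)" if "s \<in> S" for s
    using assms(2)[OF that] by (simp flip: of_real_mult)
  have "of_real (sqrt (c s)) * f s j * cnj (of_real (sqrt (c s)) * f s k)
      = (of_real (sqrt (c s)) * of_real (sqrt (c s))) * (f s j * cnj (f s k))" for s
    by (simp add: mult_ac)
  then have term_eq: "of_real (sqrt (c s)) * f s j * cnj (of_real (sqrt (c s)) * f s k)
      = of_real (c s) * (f s j * cnj (f s k))" if "s \<in> S" for s
    using sq[OF that] by simp
  then show "(\<Sum>s\<in>S. of_real (c s) * (f s j * cnj (f s k)))
      = (\<Sum>s\<in>S. of_real (sqrt (c s)) * f s j * cnj (of_real (sqrt (c s)) * f s k))"
    by (intro sum.cong refl) (metis term_eq)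
qed (use assms(1) in auto)

lemma psd_matrix_if_gram_representable:
  assumes "gram_representable n A"
  shows "psd_matrix n A"
  unfolding psd_matrix_def
proof
  fix z :: "nat \<Rightarrow> complex"
  from assms obtain I :: "nat set" and g where
    A: "\<And>j k. j \<in> {1..n} \<Longrightarrow> k \<in> {1..n} \<Longrightarrow> A j k = (\<Sum>i\<in>I. g i j * cnj (g i k))"
    unfolding gram_representable_def by blast
  define y where "y i = (\<Sum>j\<in>{1..n}. g i j * z j)" for i
  have "(\<Sum>j\<in>{1..n}. \<Sum>k\<in>{1..n}. A j k * z j * cnj (z k))
      = (\<Sum>j\<in>{1..n}. \<Sum>k\<in>{1..n}. \<Sum>i\<in>I. (g i j * z j) * cnj (g i k * z k))"
    by (intro sum.cong refl) (simp add: A sum_distrib_right sum_distrib_left mult_ac)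
  also have "\<dots> = (\<Sum>i\<in>I. y i * cnj (y i))"
    by (simp add: y_def sum_product cnj_sum sum.swap[of _ I])
  also have "\<dots> = (\<Sum>i\<in>I. of_real ((cmod (y i))\<^sup>2))"
    by (simp only: complex_norm_square)
  also have "\<dots> \<ge> 0"
    by (intro sum_nonneg) (simp add: less_eq_complex_def)
  finally show "0 \<le> (\<Sum>j\<in>{1..n}. \<Sum>k\<in>{1..n}. A j k * z j * cnj (z k))" .
qed

lemma gram_representable_mult:
  assumes "gram_representable n A" and "gram_representable n B"
  shows "gram_representable n (\<lambda>j k. A j k * B j k)"
proof -
  from assms(1) obtain I :: "nat set" and g where I: "finite I"
    and A: "\<And>j k. j \<in> {1..n} \<Longrightarrow> k \<in> {1..n} \<Longrightarrow> A j k = (\<Sum>i\<in>I. g i j * cnj (g i k))"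
    unfolding gram_representable_def by blast
  from assms(2) obtain J :: "nat set" and h where J: "finite J"
    and B: "\<And>j k. j \<in> {1..n} \<Longrightarrow> k \<in> {1..n} \<Longrightarrow> B j k = (\<Sum>i\<in>J. h i j * cnj (h i k))"
    unfolding gram_representable_def by blast
  show ?thesis
  proof (rule gram_representableI[where S = "I \<times> J" and g = "\<lambda>(a, b) j. g a j * h b j"])
    fix j k assume jk: "j \<in> {1..n}" "k \<in> {1..n}"
    show "A j k * B j k = (\<Sum>s\<in>I \<times> J. (case s of (a, b) \<Rightarrow> \<lambda>j. g a j * h b j) j *
        cnj ((case s of (a, b) \<Rightarrow> \<lambda>j. g a j * h b j) k))"
      unfolding A[OF jk] B[OF jk] sum_product sum.cartesian_product
      by (intro sum.cong refl) (auto simp: mult_ac)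
  qed (use I J in simp)
qed

lemma gram_representable_prod:
  assumes "finite L" and "\<And>l. l \<in> L \<Longrightarrow> gram_representable n (A l)"
  shows "gram_representable n (\<lambda>j k. \<Prod>l\<in>L. A l j k)"
  using assms
proof (induction L rule: finite_induct)
  case empty
  have "gram_representable n (\<lambda>j k. \<Sum>s\<in>{()}. of_real 1 * (1 * cnj 1))"
    by (rule gram_representable_weighted_sum) auto
  then show ?case by simp
next
  case (insert l L)
  then show ?case by (simp add: gram_representable_mult)
qed

lemma psd_matrix_limit:
  assumes "\<And>N. psd_matrix n (A N)"
    and "\<And>j k. j \<in> {1..n} \<Longrightarrow> k \<in> {1..n} \<Longrightarrow> (\<lambda>N. A N j k) \<longlonglongrightarrow> B j k"
  shows "psd_matrix n B"
  unfolding psd_matrix_def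
proof
  fix z :: "nat \<Rightarrow> complex"
  let ?Q = "\<lambda>N. \<Sum>j\<in>{1..n}. \<Sum>k\<in>{1..n}. A N j k * z j * cnj (z k)"
  let ?L = "\<Sum>j\<in>{1..n}. \<Sum>k\<in>{1..n}. B j k * z j * cnj (z k)"
  have lim: "?Q \<longlonglongrightarrow> ?L"
    by (intro tendsto_sum tendsto_mult tendsto_const assms(2)) auto
  have nonneg: "0 \<le> ?Q N" for N
    using assms(1) unfolding psd_matrix_def by blast
  have "Re ?L \<ge> 0"
    using tendsto_Re[OF lim] by (rule tendsto_lowerbound) (use nonneg in \<open>auto simp: less_eq_complex_def\<close>)
  moreover have "Im ?L = 0"
    using tendsto_Im[OF lim] nonneg by (simp add: less_eq_complex_def LIMSEQ_const_iff)
  ultimately show "0 \<le> ?L" by (simp add: less_eq_complex_def)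
qed

definition gram_approximable :: "nat \<Rightarrow> (nat \<Rightarrow> nat \<Rightarrow> complex) \<Rightarrow> bool" where
  "gram_approximable n B \<longleftrightarrow> (\<exists>P. (\<forall>N. gram_representable n (P N)) \<and>
      (\<forall>j\<in>{1..n}. \<forall>k\<in>{1..n}. (\<lambda>N. P N j k) \<longlonglongrightarrow> B j k))"

lemma psd_matrix_if_gram_approximable:
  assumes "gram_approximable n B"
  shows "psd_matrix n B"
proof -
  from assms obtain P where "\<And>N. gram_representable n (P N)"
    and "\<And>j k. j \<in> {1..n} \<Longrightarrow> k \<in> {1..n} \<Longrightarrow> (\<lambda>N. P N j k) \<longlonglongrightarrow> B j k"
    unfolding gram_approximable_def by blast
  then show ?thesis
    using psd_matrix_limit[of n P B] psd_matrix_if_gram_representable by blast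
qed

lemma gram_approximable_prod:
  assumes "finite L" and "\<And>l. l \<in> L \<Longrightarrow> gram_approximable n (A l)"
  shows "gram_approximable n (\<lambda>j k. \<Prod>l\<in>L. A l j k)"
proof -
  have "\<forall>l\<in>L. \<exists>P. (\<forall>N. gram_representable n (P N)) \<and>
      (\<forall>j\<in>{1..n}. \<forall>k\<in>{1..n}. (\<lambda>N. P N j k) \<longlonglongrightarrow> A l j k)"
    using assms(2) unfolding gram_approximable_def by blast
  then obtain P where P: "\<forall>l\<in>L. (\<forall>N. gram_representable n (P l N)) \<and>
      (\<forall>j\<in>{1..n}. \<forall>k\<in>{1..n}. (\<lambda>N. P l N j k) \<longlonglongrightarrow> A l j k)"
    by (rule bchoice[THEN exE])
  show ?thesis
    unfolding gram_approximable_def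
  proof (intro exI[where x = "\<lambda>N j k. \<Prod>l\<in>L. P l N j k"] conjI allI ballI)
    show "gram_representable n (\<lambda>j k. \<Prod>l\<in>L. P l N j k)" for N
      using assms(1) P by (intro gram_representable_prod) auto
    show "(\<lambda>N. \<Prod>l\<in>L. P l N j k) \<longlonglongrightarrow> (\<Prod>l\<in>L. A l j k)"
      if "j \<in> {1..n}" "k \<in> {1..n}" for j k
      using P that by (intro tendsto_prod) auto
  qed
qed

lemma summable_on_power_abs_int:
  fixes r :: real
  assumes "0 \<le> r" and "r < 1"
  shows "(\<lambda>n::int. r ^ nat \<bar>n\<bar>) summable_on UNIV"
proof -
  have geom: "(\<lambda>n::nat. r ^ n) summable_on UNIV"
    using assms by (intro summable_nonneg_imp_summable_on) auto
  have pos: "(\<lambda>n::int. r ^ nat \<bar>n\<bar>) summable_on range int"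
    by (subst summable_on_reindex) (use geom in \<open>auto simp: o_def inj_on_def\<close>)
  have neg: "(\<lambda>n::int. r ^ nat \<bar>n\<bar>) summable_on range (\<lambda>n. - int n)"
    by (subst summable_on_reindex) (use geom in \<open>auto simp: o_def inj_on_def\<close>)
  have "n \<in> range int \<union> range (\<lambda>n. - int n)" for n :: int
    by (cases "n \<ge> 0") (auto intro: image_eqI[where x = "nat n"] image_eqI[where x = "nat (- n)"])
  then have "UNIV = range int \<union> range (\<lambda>n. - int n)"
    by blast
  with summable_on_union[OF pos neg] show ?thesis by simp
qed

lemma filterlim_symmetric_intervals_finite_subsets:
  "filterlim (\<lambda>N::nat. {-int N..int N}) (finite_subsets_at_top (UNIV :: int set)) sequentially"
  unfolding filterlim_finite_subsets_at_top
proof safe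
  fix X :: "int set" assume "finite X"
  define M where "M = nat (Max (abs ` insert 0 X))"
  have "\<bar>x\<bar> \<le> int M" if "x \<in> X" for x
    unfolding M_def using \<open>finite X\<close> that by (auto intro: Max_ge)
  then have cover: "X \<subseteq> {-int N..int N}" if "N \<ge> M" for N
    using that by force
  show "\<forall>\<^sub>F N in sequentially. finite {-int N..int N} \<and> X \<subseteq> {-int N..int N} \<and> {-int N..int N} \<subseteq> UNIV"
    by (rule eventually_mono[OF eventually_ge_at_top[of M]]) (use cover in auto)
qed

lemma tendsto_symmetric_sums_infsum:
  fixes f :: "int \<Rightarrow> 'a::{comm_monoid_add, t2_space}"
  assumes "f summable_on UNIV"
  shows "(\<lambda>N. \<Sum>n\<in>{-int N..int N}. f n) \<longlonglongrightarrow> infsum f UNIV"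
  using filterlim_compose[OF has_sum_infsum[OF assms, unfolded has_sum_def]
      filterlim_symmetric_intervals_finite_subsets]
  by (simp add: o_def)

definition dn_coeff :: "real \<Rightarrow> int \<Rightarrow> real" where
  "dn_coeff q n = q powi n / (1 + q powi (2 * n))"

lemma dn_coeff_nonneg: "0 < q \<Longrightarrow> 0 \<le> dn_coeff q n"
  by (simp add: dn_coeff_def)

lemma dn_coeff_le:
  assumes "0 < q"
  shows "dn_coeff q n \<le> q ^ nat \<bar>n\<bar>"
proof -
  \<comment> \<open>With x = q^n: x / (1 + x^2) is below both x and 1/x.\<close>
  define x where "x = q powi n"
  have "x > 0" using assms(1) by (simp add: x_def)
  then have "1 + x\<^sup>2 > 0" by (simp add: add_pos_nonneg)
  have dn: "dn_coeff q n = x / (1 + x\<^sup>2)"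
    by (simp add: dn_coeff_def x_def power_int_power' mult.commute)
  show ?thesis
  proof (cases "n \<ge> 0")
    case True
    then have "q ^ nat \<bar>n\<bar> = x" by (simp add: x_def power_int_def)
    with \<open>x > 0\<close> \<open>1 + x\<^sup>2 > 0\<close> show ?thesis
      unfolding dn by (simp add: divide_le_eq)
  next
    case False
    then have "q ^ nat \<bar>n\<bar> = inverse x"
      by (simp add: x_def power_int_def power_inverse)
    with \<open>x > 0\<close> \<open>1 + x\<^sup>2 > 0\<close> assms(1) show ?thesis
      unfolding dn by (simp add: divide_le_eq field_simps power2_eq_square)
  qed
qed

lemma norm_dn_term_le:
  assumes "0 < q"
  shows "norm (of_real (dn_coeff q n) * exp (2 * of_int n * of_real pi * x * \<i>))
    \<le> (q * exp (2 * pi * \<bar>Im x\<bar>)) ^ nat \<bar>n\<bar>"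
proof -
  have "- 2 * of_int n * pi * Im x \<le> real (nat \<bar>n\<bar>) * (2 * pi * \<bar>Im x\<bar>)"
    using abs_ge_self[of "- 2 * of_int n * pi * Im x"] by (simp add: abs_mult)
  then have "norm (exp (2 * of_int n * of_real pi * x * \<i>)) \<le> exp (2 * pi * \<bar>Im x\<bar>) ^ nat \<bar>n\<bar>"
    by (simp add: norm_exp_eq_Re flip: exp_of_nat_mult)
  with dn_coeff_le[OF assms] dn_coeff_nonneg[OF assms] show ?thesis
    unfolding norm_mult power_mult_distrib using assms by (intro mult_mono) auto
qed

lemma exp_Im_diff_cnj_less:
  assumes "0 < q" and "q * exp (4 * pi * \<bar>Im a\<bar>) < 1" and "q * exp (4 * pi * \<bar>Im b\<bar>) < 1"
  shows "q * exp (2 * pi * \<bar>Im (a - cnj b)\<bar>) < 1"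
proof -
  have "\<bar>Im (a - cnj b)\<bar> \<le> 2 * max \<bar>Im a\<bar> \<bar>Im b\<bar>"
    using abs_triangle_ineq[of "Im a" "Im b"] by (simp add: max_def)
  then have "2 * pi * \<bar>Im (a - cnj b)\<bar> \<le> 4 * pi * max \<bar>Im a\<bar> \<bar>Im b\<bar>"
    using mult_left_mono[of _ _ "2 * pi"] pi_gt_zero by fastforce
  then have "q * exp (2 * pi * \<bar>Im (a - cnj b)\<bar>) \<le> q * exp (4 * pi * max \<bar>Im a\<bar> \<bar>Im b\<bar>)"
    using assms(1) by simp
  also have "\<dots> < 1"
    using assms(2,3) by (simp add: max_def)
  finally show ?thesis .
qed

lemma exp_diff_cnj:
  "exp (2 * of_int n * of_real pi * (a - cnj b) * \<i>)
    = exp (2 * of_int n * of_real pi * a * \<i>) * cnj (exp (2 * of_int n * of_real pi * b * \<i>))"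
proof -
  have "2 * of_int n * of_real pi * (a - cnj b) * \<i>
      = 2 * of_int n * of_real pi * a * \<i> + cnj (2 * of_int n * of_real pi * b * \<i>)"
    by (simp add: algebra_simps)
  then show ?thesis
    by (simp only: exp_add exp_cnj)
qed

lemma gram_approximable_dn_diff_cnj:
  fixes w :: "nat \<Rightarrow> complex"
  assumes q: "0 < q"
    and w: "\<And>j. j \<in> {1..n} \<Longrightarrow> q * exp (4 * pi * \<bar>Im (w j)\<bar>) < 1"
  shows "gram_approximable n (\<lambda>j k. dn q (of_real (2 * jacobiK q) * (w j - cnj (w k))))"
proof (cases "jacobiK q = 0")
  case True
  \<comment> \<open>Impossible since theta3 q \<ge> 1, but then dn vanishes anyway because of division by 0.\<close>
  then have "dn q u = 0" for u by (simp add: dn_def)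
  moreover have "gram_representable n (\<lambda>j k. 0)"
    by (rule gram_representableI[where S = "{}::nat set"]) auto
  ultimately show ?thesis
    unfolding gram_approximable_def by auto
next
  case False
  define c where "c = pi / jacobiK q"
  have "c \<ge> 0" by (simp add: c_def jacobiK_def)
  define e where "e n v = exp (2 * of_int n * of_real pi * v * \<i>)" for n :: int and v
  define t where "t j k = (\<lambda>n. of_real (dn_coeff q n) * (e n (w j) * cnj (e n (w k))))" for j k
  define P where "P N j k = (\<Sum>n\<in>{-int N..int N}. of_real (c * dn_coeff q n) * (e n (w j) * cnj (e n (w k))))"
    for N j k
  have "gram_representable n (P N)" for N
    unfolding P_def using q \<open>c \<ge> 0\<close>
    by (intro gram_representable_weighted_sum) (auto simp: dn_coeff_nonneg)
  moreover have "(\<lambda>N. P N j k) \<longlonglongrightarrow> dn q (of_real (2 * jacobiK q) * (w j - cnj (w k)))"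
    if "j \<in> {1..n}" "k \<in> {1..n}" for j k
  proof -
    define r where "r = q * exp (2 * pi * \<bar>Im (w j - cnj (w k))\<bar>)"
    have "0 \<le> r" "r < 1"
      using q exp_Im_diff_cnj_less[OF q w w] that by (auto simp: r_def)
    have bound: "norm (t j k n) \<le> norm (r ^ nat \<bar>n\<bar>)" for n
      using norm_dn_term_le[OF q, of n "w j - cnj (w k)"] \<open>0 \<le> r\<close>
      by (simp add: t_def e_def r_def exp_diff_cnj)
    have "(\<lambda>n. norm (r ^ nat \<bar>n\<bar>)) summable_on UNIV"
      using summable_on_power_abs_int[OF \<open>0 \<le> r\<close> \<open>r < 1\<close>] \<open>0 \<le> r\<close> by simp
    then have "t j k summable_on UNIV"
      by (rule Infinite_Sum.abs_summable_summable[OF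
          Infinite_Sum.abs_summable_on_comparison_test[OF _ bound]])
    then have "(\<lambda>N. of_real c * (\<Sum>n\<in>{-int N..int N}. t j k n)) \<longlonglongrightarrow> of_real c * infsum (t j k) UNIV"
      by (intro tendsto_mult_left tendsto_symmetric_sums_infsum)
    moreover have "of_real (2 * jacobiK q) * (w j - cnj (w k)) / of_real (2 * jacobiK q) = w j - cnj (w k)"
      using False by simp
    then have "dn q (of_real (2 * jacobiK q) * (w j - cnj (w k))) = of_real c * infsum (t j k) UNIV"
      unfolding dn_def c_def t_def e_def dn_coeff_def by (simp only: exp_diff_cnj)
    ultimately show ?thesis
      by (simp add: P_def t_def sum_distrib_left mult.assoc)
  qed
  ultimately show ?thesis
    unfolding gram_approximable_def by blast
qed

theorem mainTheorem2:
  fixes m n :: nat and q :: "nat \<Rightarrow> real" and v :: "nat \<Rightarrow> nat \<Rightarrow> complex"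
  assumes q_pos: "\<And>l. l \<in> {1..m} \<Longrightarrow> 0 < q l"
    and q_lt1: "\<And>l. l \<in> {1..m} \<Longrightarrow> q l < 1"
    and v_cond: "\<And>j l. j \<in> {1..n} \<Longrightarrow> l \<in> {1..m} \<Longrightarrow>
                   q l * exp (4 * pi * \<bar>Im (v j l)\<bar>) < 1"
  shows "psd_matrix n (\<lambda>j k. \<Prod>l\<in>{1..m}.
           dn (q l) (complex_of_real (2 * jacobiK (q l)) * (v j l - cnj (v k l))))"
proof (rule psd_matrix_if_gram_approximable, rule gram_approximable_prod)
  fix l assume l: "l \<in> {1..m}"
  show "gram_approximable n (\<lambda>j k.
      dn (q l) (complex_of_real (2 * jacobiK (q l)) * (v j l - cnj (v k l))))"
    using q_pos[OF l] v_cond[OF _ l] by (rule gram_approximable_dn_diff_cnj)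
qed simp

end
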